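(* Let $n\ge2$ and $T\ge4$ be integers, $H:=\lceil\log_2T\rceil$, $\alpha=1/(4H)$ and $\alpha_0=\frac{\sqrt{\alpha/8}}{H^3}$. Let $Z^{(1)},\dots,Z^{(T)}\in[0,1]^n$ (with $Z^{(0)}:=0$) and $P^{(1)},\dots,P^{(T)}\in\Delta^n$ satisfy: (1) for each $0\le h\le H$ and $1\le t\le T-h$, $\|(D_hZ)^{(t)}\|_\infty\le H\cdot(\alpha_0H^3)^h$; (2) the sequence $P^{(1)},\dots,P^{(T)}$ is $\zeta$-consecutively close for some $\zeta\in[1/(2T),\alpha^4/8256]$. Then $$\sum_{t=1}^T\mathrm{Var}_{P^{(t)}}\big(Z^{(t)}-Z^{(t-1)}\big)\le2\alpha\sum_{t=1}^T\mathrm{Var}_{P^{(t)}}\big(Z^{(t-1)}\big)+165120(1+\zeta)H^5+2.$$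
   Context: Finite differences: $(D_0Z)^{(t)}=Z^{(t)}$, $(D_hZ)^{(t)}=(D_{h-1}Z)^{(t+1)}-(D_{h-1}Z)^{(t)}$ for $1\le t\le T-h$. A sequence of full-support $P^{(t)}\in\Delta^n$ is $\zeta$-consecutively close if for each $1\le t<T$, $\max\{\max_jP^{(t)}(j)/P^{(t+1)}(j),\max_jP^{(t+1)}(j)/P^{(t)}(j)\}\le1+\zeta$. $\mathrm{Var}_P(v)=\sum_jP(j)(v(j)-\langle P,v\rangle)^2$. *)

theory Defs
  imports "HOL-Analysis.Analysis"
begin

text \<open>Vectors in R^n are functions nat => real, indexed by {0..<n}.
  A sequence of vectors is a function nat => (nat => real), indexed by time t.\<close>

fun fdiff :: "nat \<Rightarrow> (nat \<Rightarrow> nat \<Rightarrow> real) \<Rightarrow> nat \<Rightarrow> nat \<Rightarrow> real" where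
  "fdiff 0 Z t = Z t"
| "fdiff (Suc h) Z t = (\<lambda>j. fdiff h Z (Suc t) j - fdiff h Z t j)"

definition in_simplex :: "nat \<Rightarrow> (nat \<Rightarrow> real) \<Rightarrow> bool" where
  "in_simplex n p \<longleftrightarrow> (\<forall>j<n. p j \<ge> 0) \<and> (\<Sum>j<n. p j) = 1"

definition full_support :: "nat \<Rightarrow> (nat \<Rightarrow> real) \<Rightarrow> bool" where
  "full_support n p \<longleftrightarrow> (\<forall>j<n. p j > 0)"

definition consecutively_close ::
  "nat \<Rightarrow> nat \<Rightarrow> real \<Rightarrow> (nat \<Rightarrow> nat \<Rightarrow> real) \<Rightarrow> bool" where
  "consecutively_close n T \<zeta> P \<longleftrightarrow>
     (\<forall>t. 1 \<le> t \<and> t \<le> T \<longrightarrow> in_simplex n (P t) \<and> full_support n (P t)) \<and>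
     (\<forall>t. 1 \<le> t \<and> t < T \<longrightarrow>
        max (Max ((\<lambda>j. P t j / P (Suc t) j) ` {..<n}))
            (Max ((\<lambda>j. P (Suc t) j / P t j) ` {..<n})) \<le> 1 + \<zeta>)"

definition inner_n :: "nat \<Rightarrow> (nat \<Rightarrow> real) \<Rightarrow> (nat \<Rightarrow> real) \<Rightarrow> real" where
  "inner_n n p v = (\<Sum>j<n. p j * v j)"

definition Var_P :: "nat \<Rightarrow> (nat \<Rightarrow> real) \<Rightarrow> (nat \<Rightarrow> real) \<Rightarrow> real" where
  "Var_P n p v = (\<Sum>j<n. p j * (v j - inner_n n p v)^2)"

definition sup_norm :: "nat \<Rightarrow> (nat \<Rightarrow> real) \<Rightarrow> real" where
  "sup_norm n v = Max ((\<lambda>j. \<bar>v j\<bar>) ` {..<n})"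

end

theory Submission
  imports Defs
begin

(*
  Let S_h be twice the sum over t of Var_P(t) ((D_h Z)(t)), written with the pair weights
  P(i) P(j) and the squared gaps (v(i) - v(j))^2. Summation by parts in t and Cauchy-Schwarz
  make S_h nearly log-convex,
    S_(h+1) <= b_h + sqrt (k S_h S_(h+2)) + (k - 1) sqrt (k S_h S_(h+1)),   k = (1 + zeta)^2,
  where k bounds the drift of the pair weights and the boundary terms b_h are small by the
  bounds on the finite differences. Hence if S_1 >= rho S_0 with rho = 2 alpha / k^2, the
  ratios S_(h+1) / S_h stay above rho / 2 up to h = H, whereas the bound on D_H Z gives
  S_H <= 4 H^2 (alpha / 4)^H; this caps S_0, so S_1 <= rho S_0 + O(H^5) in every case.
  Up to factors k and the boundary terms, the left-hand sum is S_1 / 2 and the right-hand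
  sum is at least S_0 / 2.
*)

lemma weighted_Cauchy_Schwarz:
  fixes p f g :: "'a \<Rightarrow> real"
  assumes "\<And>x. x \<in> A \<Longrightarrow> 0 \<le> p x"
  shows "(\<Sum>x\<in>A. p x * f x * g x)\<^sup>2 \<le> (\<Sum>x\<in>A. p x * (f x)\<^sup>2) * (\<Sum>x\<in>A. p x * (g x)\<^sup>2)"
proof -
  have "(\<Sum>x\<in>A. p x * f x * g x) = (\<Sum>x\<in>A. (sqrt (p x) * f x) * (sqrt (p x) * g x))"
    by (rule sum.cong) (use assms in \<open>auto simp: algebra_simps real_sqrt_mult[symmetric]\<close>)
  moreover have "\<And>f. (\<Sum>x\<in>A. p x * (f x)\<^sup>2) = (\<Sum>x\<in>A. (sqrt (p x) * f x)\<^sup>2)"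
    by (rule sum.cong) (use assms in \<open>auto simp: power_mult_distrib\<close>)
  ultimately show ?thesis
    by (simp only:) (rule Cauchy_Schwarz_ineq_sum)
qed

lemma sum_weighted_square_diff_by_parts:
  fixes w a :: "nat \<Rightarrow> real"
  defines "c \<equiv> \<lambda>t. a (Suc t) - a t"
  assumes "1 \<le> N"
  shows "(\<Sum>t=1..N. w t * (c t)\<^sup>2) = w N * c N * a (Suc N) - w 1 * c 1 * a 1
     - (\<Sum>u=1..<N. w (Suc u) * a (Suc u) * (c (Suc u) - c u))
     + (\<Sum>u=1..<N. (w u - w (Suc u)) * a (Suc u) * c u)"
  using assms(2)
proof (induction N rule: dec_induct)
  case base
  then show ?case by (simp add: c_def power2_eq_square algebra_simps)
next
  case (step m)
  then show ?case by (simp add: c_def power2_eq_square algebra_simps)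
qed

definition fwd_diff :: "(nat \<Rightarrow> 'a \<Rightarrow> real) \<Rightarrow> nat \<Rightarrow> 'a \<Rightarrow> real" where
  "fwd_diff f t k = f (Suc t) k - f t k"

locale drifting_weights =
  fixes K :: "'k set" and T :: nat and \<kappa> :: real and w :: "nat \<Rightarrow> 'k \<Rightarrow> real"
  assumes nonneg: "\<And>t k. 1 \<le> t \<Longrightarrow> t \<le> T \<Longrightarrow> k \<in> K \<Longrightarrow> 0 \<le> w t k"
    and Suc_le: "\<And>t k. 1 \<le> t \<Longrightarrow> t < T \<Longrightarrow> k \<in> K \<Longrightarrow> w (Suc t) k \<le> \<kappa> * w t k"
    and le_Suc: "\<And>t k. 1 \<le> t \<Longrightarrow> t < T \<Longrightarrow> k \<in> K \<Longrightarrow> w t k \<le> \<kappa> * w (Suc t) k"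
    and kappa_ge_1: "1 \<le> \<kappa>"
begin

definition energy :: "nat \<Rightarrow> (nat \<Rightarrow> 'k \<Rightarrow> real) \<Rightarrow> real" where
  "energy N f = (\<Sum>t=1..N. \<Sum>k\<in>K. w t k * (f t k)\<^sup>2)"

lemma energy_nonneg: "N \<le> T \<Longrightarrow> 0 \<le> energy N f"
  unfolding energy_def by (intro sum_nonneg mult_nonneg_nonneg) (auto intro: nonneg)

lemma energy_mono: "N \<le> M \<Longrightarrow> M \<le> T \<Longrightarrow> energy N f \<le> energy M f"
  unfolding energy_def by (rule sum_mono2) (auto intro!: sum_nonneg mult_nonneg_nonneg nonneg)

lemma shifted_sum_le_energy:
  assumes "Suc N \<le> T"
  shows "(\<Sum>t=1..N. \<Sum>k\<in>K. w (Suc t) k * (f (Suc t) k)\<^sup>2) \<le> energy (Suc N) f"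
proof -
  have "(\<Sum>t=1..N. \<Sum>k\<in>K. w (Suc t) k * (f (Suc t) k)\<^sup>2) = (\<Sum>t=Suc 1..Suc N. \<Sum>k\<in>K. w t k * (f t k)\<^sup>2)"
    by (rule sum.shift_bounds_cl_Suc_ivl[symmetric])
  also have "\<dots> \<le> energy (Suc N) f"
    unfolding energy_def using assms
    by (intro sum_mono2) (auto intro!: sum_nonneg mult_nonneg_nonneg nonneg)
  finally show ?thesis .
qed

lemma abs_weight_diff_le:
  assumes "1 \<le> t" "t < T" "k \<in> K"
  shows "\<bar>w t k - w (Suc t) k\<bar> \<le> (\<kappa> - 1) * w (Suc t) k"
proof -
  have "0 \<le> (\<kappa> - 1) * w (Suc t) k"
    using kappa_ge_1 nonneg[of "Suc t" k] assms by simp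
  then have "\<kappa> * (w (Suc t) k - w t k) \<le> \<kappa> * ((\<kappa> - 1) * w (Suc t) k)"
    using Suc_le[OF assms] mult_right_mono[OF kappa_ge_1] by (fastforce simp: algebra_simps)
  then have "w (Suc t) k - w t k \<le> (\<kappa> - 1) * w (Suc t) k"
    using kappa_ge_1 by simp
  moreover have "w t k - w (Suc t) k \<le> (\<kappa> - 1) * w (Suc t) k"
    using le_Suc[OF assms] by (simp add: algebra_simps)
  ultimately show ?thesis
    by (simp add: abs_le_iff)
qed

lemma weighted_cross_sum_le:
  assumes "1 \<le> N" "N \<le> T"
  shows "(\<Sum>u=1..<N. \<Sum>k\<in>K. w (Suc u) k * \<bar>f (Suc u) k\<bar> * \<bar>g u k\<bar>)
    \<le> sqrt (\<kappa> * energy N f * energy (N - 1) g)"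
proof -
  let ?I = "{1..<N} \<times> K"
  have w_nonneg: "\<And>x. x \<in> ?I \<Longrightarrow> 0 \<le> (\<lambda>(u, k). w (Suc u) k) x"
    using assms by (auto intro!: nonneg)
  have "(\<Sum>u=1..<N. \<Sum>k\<in>K. w (Suc u) k * \<bar>f (Suc u) k\<bar> * \<bar>g u k\<bar>)\<^sup>2
      \<le> (\<Sum>(u, k)\<in>?I. w (Suc u) k * (f (Suc u) k)\<^sup>2) * (\<Sum>(u, k)\<in>?I. w (Suc u) k * (g u k)\<^sup>2)"
    using weighted_Cauchy_Schwarz[OF w_nonneg, where f="\<lambda>(u, k). \<bar>f (Suc u) k\<bar>" and g="\<lambda>(u, k). \<bar>g u k\<bar>"]
    by (simp add: sum.cartesian_product case_prod_beta)
  also have "\<dots> \<le> energy N f * (\<kappa> * energy (N - 1) g)"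
  proof (rule mult_mono)
    have "{1..<N} = {1..N - 1}" using assms by auto
    then show "(\<Sum>(u, k)\<in>?I. w (Suc u) k * (f (Suc u) k)\<^sup>2) \<le> energy N f"
      using shifted_sum_le_energy[of "N - 1" f] assms by (simp add: sum.cartesian_product)
    have "(\<Sum>(u, k)\<in>?I. w (Suc u) k * (g u k)\<^sup>2) \<le> (\<Sum>(u, k)\<in>?I. \<kappa> * (w u k * (g u k)\<^sup>2))"
      using assms by (intro sum_mono) (auto simp: mult.assoc[symmetric] intro!: mult_right_mono Suc_le)
    also have "\<dots> = \<kappa> * energy (N - 1) g"
      using \<open>{1..<N} = {1..N - 1}\<close>
      by (simp add: energy_def sum.cartesian_product sum_distrib_left case_prod_beta)
    finally show "(\<Sum>(u, k)\<in>?I. w (Suc u) k * (g u k)\<^sup>2) \<le> \<kappa> * energy (N - 1) g" .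
    show "0 \<le> energy N f"
      using assms by (simp add: energy_nonneg)
    show "0 \<le> (\<Sum>(u, k)\<in>?I. w (Suc u) k * (g u k)\<^sup>2)"
      using w_nonneg by (auto intro!: sum_nonneg)
  qed
  also have "\<dots> = \<kappa> * energy N f * energy (N - 1) g"
    by (simp add: mult_ac)
  finally show ?thesis
    by (rule real_le_rsqrt)
qed

lemma energy_fwd_diff_le:
  assumes "N < T"
  shows "energy N (fwd_diff f) \<le> (2 * \<kappa> + 2) * energy (Suc N) f"
proof -
  have "energy N (fwd_diff f)
      \<le> (\<Sum>t=1..N. \<Sum>k\<in>K. 2 * \<kappa> * (w (Suc t) k * (f (Suc t) k)\<^sup>2) + 2 * (w t k * (f t k)\<^sup>2))"
    unfolding energy_def
  proof (intro sum_mono)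
    fix t k assume t: "t \<in> {1..N}" and k: "k \<in> K"
    have "2 * (f (Suc t) k)\<^sup>2 + 2 * (f t k)\<^sup>2 - (f (Suc t) k - f t k)\<^sup>2 = (f (Suc t) k + f t k)\<^sup>2"
      by (simp add: power2_eq_square algebra_simps)
    then have "(f (Suc t) k - f t k)\<^sup>2 \<le> 2 * (f (Suc t) k)\<^sup>2 + 2 * (f t k)\<^sup>2"
      using zero_le_power2[of "f (Suc t) k + f t k"] by linarith
    then have "w t k * (fwd_diff f t k)\<^sup>2 \<le> 2 * (w t k * (f (Suc t) k)\<^sup>2) + 2 * (w t k * (f t k)\<^sup>2)"
      using nonneg[of t k] t k assms mult_left_mono[of _ _ "w t k"]
      by (fastforce simp: fwd_diff_def algebra_simps)
    also have "\<dots> \<le> 2 * \<kappa> * (w (Suc t) k * (f (Suc t) k)\<^sup>2) + 2 * (w t k * (f t k)\<^sup>2)"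
      using le_Suc[of t k] t k assms by (auto simp: mult.assoc[symmetric] intro!: mult_right_mono)
    finally show "w t k * (fwd_diff f t k)\<^sup>2
      \<le> 2 * \<kappa> * (w (Suc t) k * (f (Suc t) k)\<^sup>2) + 2 * (w t k * (f t k)\<^sup>2)" .
  qed
  also have "\<dots> = 2 * \<kappa> * (\<Sum>t=1..N. \<Sum>k\<in>K. w (Suc t) k * (f (Suc t) k)\<^sup>2) + 2 * energy N f"
    by (simp add: energy_def sum.distrib sum_distrib_left)
  also have "\<dots> \<le> 2 * \<kappa> * energy (Suc N) f + 2 * energy (Suc N) f"
    using assms kappa_ge_1
    by (intro add_mono mult_left_mono shifted_sum_le_energy energy_mono) auto
  finally show ?thesis
    by (simp add: algebra_simps)
qed

lemma energy_fwd_diff_by_parts: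
  assumes "1 \<le> N"
  shows "energy N (fwd_diff f)
    = (\<Sum>k\<in>K. w N k * fwd_diff f N k * f (Suc N) k) - (\<Sum>k\<in>K. w 1 k * fwd_diff f 1 k * f 1 k)
      - (\<Sum>u=1..<N. \<Sum>k\<in>K. w (Suc u) k * f (Suc u) k * fwd_diff (fwd_diff f) u k)
      + (\<Sum>u=1..<N. \<Sum>k\<in>K. (w u k - w (Suc u) k) * f (Suc u) k * fwd_diff f u k)"
proof -
  have "energy N (fwd_diff f) = (\<Sum>k\<in>K. \<Sum>t=1..N. w t k * (fwd_diff f t k)\<^sup>2)"
    unfolding energy_def by (rule sum.swap)
  also have "\<dots> = (\<Sum>k\<in>K. w N k * fwd_diff f N k * f (Suc N) k - w 1 k * fwd_diff f 1 k * f 1 k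
      - (\<Sum>u=1..<N. w (Suc u) k * f (Suc u) k * fwd_diff (fwd_diff f) u k)
      + (\<Sum>u=1..<N. (w u k - w (Suc u) k) * f (Suc u) k * fwd_diff f u k))"
    using sum_weighted_square_diff_by_parts[OF assms, of "\<lambda>t. w t _" "\<lambda>t. f t _"]
    by (simp add: fwd_diff_def)
  finally show ?thesis
    by (simp add: sum.distrib sum_subtractf sum.swap[of _ K])
qed

lemma energy_fwd_diff_recursion:
  assumes "1 \<le> N" "N < T"
  shows "energy N (fwd_diff f)
    \<le> \<bar>\<Sum>k\<in>K. w N k * fwd_diff f N k * f (Suc N) k\<bar> + \<bar>\<Sum>k\<in>K. w 1 k * fwd_diff f 1 k * f 1 k\<bar>
      + sqrt (\<kappa> * energy (Suc N) f * energy (N - 1) (fwd_diff (fwd_diff f)))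
      + (\<kappa> - 1) * sqrt (\<kappa> * energy (Suc N) f * energy N (fwd_diff f))"
proof -
  have abs_double_sum: "\<bar>\<Sum>u\<in>U. \<Sum>k\<in>K. h u k\<bar> \<le> (\<Sum>u\<in>U. \<Sum>k\<in>K. \<bar>h u k\<bar>)"
    for U and h :: "nat \<Rightarrow> 'k \<Rightarrow> real"
    by (rule order_trans[OF sum_abs sum_mono[OF sum_abs]])
  have w_nonneg: "0 \<le> w (Suc u) k" if "u \<in> {1..<N}" "k \<in> K" for u k
    using that assms by (intro nonneg) auto
  have sqrt_le: "sqrt (\<kappa> * energy N f * energy (N - 1) g) \<le> sqrt (\<kappa> * energy (Suc N) f * energy M g)"
    if "N - 1 \<le> M" "M \<le> T" for g M
    using that assms kappa_ge_1
    by (intro real_sqrt_le_mono mult_mono mult_left_mono energy_mono energy_nonneg)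
      (auto intro!: mult_nonneg_nonneg energy_nonneg)
  have "\<bar>\<Sum>u=1..<N. \<Sum>k\<in>K. w (Suc u) k * f (Suc u) k * fwd_diff (fwd_diff f) u k\<bar>
      \<le> (\<Sum>u=1..<N. \<Sum>k\<in>K. w (Suc u) k * \<bar>f (Suc u) k\<bar> * \<bar>fwd_diff (fwd_diff f) u k\<bar>)"
    by (rule order_trans[OF abs_double_sum]) (auto simp: abs_mult w_nonneg intro!: sum_mono)
  also have "\<dots> \<le> sqrt (\<kappa> * energy (Suc N) f * energy (N - 1) (fwd_diff (fwd_diff f)))"
    using order_trans[OF weighted_cross_sum_le sqrt_le[of "N - 1"]] assms by simp
  finally have M: "\<bar>\<Sum>u=1..<N. \<Sum>k\<in>K. w (Suc u) k * f (Suc u) k * fwd_diff (fwd_diff f) u k\<bar>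
      \<le> sqrt (\<kappa> * energy (Suc N) f * energy (N - 1) (fwd_diff (fwd_diff f)))" .
  have "\<bar>\<Sum>u=1..<N. \<Sum>k\<in>K. (w u k - w (Suc u) k) * f (Suc u) k * fwd_diff f u k\<bar>
      \<le> (\<Sum>u=1..<N. \<Sum>k\<in>K. (\<kappa> - 1) * (w (Suc u) k * \<bar>f (Suc u) k\<bar> * \<bar>fwd_diff f u k\<bar>))"
  proof (rule order_trans[OF abs_double_sum], intro sum_mono)
    fix u k assume "u \<in> {1..<N}" "k \<in> K"
    then show "\<bar>(w u k - w (Suc u) k) * f (Suc u) k * fwd_diff f u k\<bar>
      \<le> (\<kappa> - 1) * (w (Suc u) k * \<bar>f (Suc u) k\<bar> * \<bar>fwd_diff f u k\<bar>)"
      using abs_weight_diff_le[of u k] assms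
      by (auto simp: abs_mult mult.assoc[symmetric] intro!: mult_right_mono)
  qed
  also have "\<dots> = (\<kappa> - 1) * (\<Sum>u=1..<N. \<Sum>k\<in>K. w (Suc u) k * \<bar>f (Suc u) k\<bar> * \<bar>fwd_diff f u k\<bar>)"
    by (simp add: sum_distrib_left)
  also have "\<dots> \<le> (\<kappa> - 1) * sqrt (\<kappa> * energy (Suc N) f * energy N (fwd_diff f))"
    using order_trans[OF weighted_cross_sum_le sqrt_le[of N]] assms kappa_ge_1
    by (intro mult_left_mono) auto
  finally have E: "\<bar>\<Sum>u=1..<N. \<Sum>k\<in>K. (w u k - w (Suc u) k) * f (Suc u) k * fwd_diff f u k\<bar>
      \<le> (\<kappa> - 1) * sqrt (\<kappa> * energy (Suc N) f * energy N (fwd_diff f))" .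
  show ?thesis
    using energy_fwd_diff_by_parts[OF assms(1), of f] M E by linarith
qed

end

lemma growth_step:
  fixes x0 x1 x2 b c \<kappa> \<mu> \<beta> \<delta> :: real
  assumes "0 \<le> x0" "0 < x1" "0 \<le> x2" "0 \<le> c" "1 \<le> \<kappa>" "0 \<le> \<delta>" "\<beta> + \<delta> \<le> 1"
    and "c * x0 \<le> x1" "x0 \<le> \<mu> * x1" "b \<le> \<beta> * x1" "(\<kappa> - 1)\<^sup>2 * \<kappa> * \<mu> \<le> \<delta>\<^sup>2"
    and rec: "x1 \<le> b + sqrt (\<kappa> * x0 * x2) + (\<kappa> - 1) * sqrt (\<kappa> * x0 * x1)"
  shows "c * ((1 - \<beta> - \<delta>)\<^sup>2 / \<kappa>) * x1 \<le> x2"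
proof -
  have "0 \<le> \<kappa> * x0 * x1"
    using assms by simp
  then have "((\<kappa> - 1) * sqrt (\<kappa> * x0 * x1))\<^sup>2 = (\<kappa> - 1)\<^sup>2 * \<kappa> * x0 * x1"
    by (simp add: power_mult_distrib mult.assoc)
  also have "\<dots> \<le> (\<kappa> - 1)\<^sup>2 * \<kappa> * (\<mu> * x1) * x1"
    using assms by (intro mult_right_mono mult_left_mono) auto
  also have "\<dots> \<le> (\<delta> * x1)\<^sup>2"
    using assms mult_right_mono[OF \<open>(\<kappa> - 1)\<^sup>2 * \<kappa> * \<mu> \<le> \<delta>\<^sup>2\<close>, of "x1 * x1"]
    by (simp add: power2_eq_square mult_ac)
  finally have "(\<kappa> - 1) * sqrt (\<kappa> * x0 * x1) \<le> \<delta> * x1"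
    by (rule power2_le_imp_le) (use assms in simp)
  then have "(1 - \<beta> - \<delta>) * x1 \<le> sqrt (\<kappa> * x0 * x2)"
    using rec \<open>b \<le> \<beta> * x1\<close> by (simp add: algebra_simps)
  moreover have "0 \<le> (1 - \<beta> - \<delta>) * x1"
    using assms by simp
  ultimately have "((1 - \<beta> - \<delta>) * x1)\<^sup>2 \<le> (sqrt (\<kappa> * x0 * x2))\<^sup>2"
    by (rule power_mono)
  also have "\<dots> = \<kappa> * x0 * x2"
    using assms by simp
  finally have "c * ((1 - \<beta> - \<delta>) * x1)\<^sup>2 \<le> c * (\<kappa> * x0 * x2)"
    using assms by (intro mult_left_mono) auto
  then have "c * (1 - \<beta> - \<delta>)\<^sup>2 * x1 * x1 \<le> \<kappa> * x2 * (c * x0)"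
    by (simp add: power_mult_distrib power2_eq_square mult_ac)
  also have "\<dots> \<le> \<kappa> * x2 * x1"
    using assms by (intro mult_left_mono) auto
  finally have "c * (1 - \<beta> - \<delta>)\<^sup>2 * x1 \<le> \<kappa> * x2"
    using \<open>0 < x1\<close> by (simp add: mult_le_cancel_right_pos)
  then show ?thesis
    using assms by (simp add: field_simps)
qed

lemma geometric_growth_chain:
  fixes S b :: "nat \<Rightarrow> real" and \<rho> \<kappa> \<beta> \<delta> :: real
  defines "\<gamma> \<equiv> (1 - \<beta> - \<delta>)\<^sup>2 / \<kappa>"
  assumes S_nonneg: "\<And>h. 0 \<le> S h" and S0: "0 < S 0" and \<rho>: "0 < \<rho>" and \<kappa>: "1 \<le> \<kappa>"
    and coeffs: "0 \<le> \<beta>" "0 \<le> \<delta>" "\<beta> + \<delta> \<le> 1" "(\<kappa> - 1)\<^sup>2 * \<kappa> * (2 / \<rho>) \<le> \<delta>\<^sup>2"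
    and \<gamma>: "1/2 \<le> \<gamma> ^ H"
    and base: "\<rho> * S 0 \<le> S 1"
    and rec: "\<And>m. m + 1 < H \<Longrightarrow>
      S (m + 1) \<le> b m + sqrt (\<kappa> * S m * S (m + 2)) + (\<kappa> - 1) * sqrt (\<kappa> * S m * S (m + 1))"
    and b: "\<And>m. m + 1 < H \<Longrightarrow> b m \<le> \<beta> * (\<rho>/2) ^ (m + 1) * S 0"
  shows "(\<rho>/2) ^ H * S 0 \<le> S H"
proof -
  have "0 \<le> \<gamma>" "\<gamma> \<le> 1"
    using \<kappa> coeffs by (auto simp: \<gamma>_def divide_le_eq intro!: power_le_one order_trans[OF _ \<kappa>])
  then have \<gamma>_pow: "1/2 \<le> \<gamma> ^ k" if "k \<le> H" for k
    using \<gamma> power_decreasing[OF that] by (meson order_trans)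
  \<comment> \<open>Each step loses at most a factor \<open>\<gamma>\<close> in the ratio \<open>S (k + 1) / S k\<close>, which thus stays above \<open>\<rho>/2\<close>.\<close>
  have "\<rho> * \<gamma> ^ k * S k \<le> S (Suc k) \<and> (\<rho>/2) ^ Suc k * S 0 \<le> S (Suc k)" if "Suc k \<le> H" for k
    using that
  proof (induction k)
    case 0
    then show ?case using base S_nonneg[of 1] by simp
  next
    case (Suc k)
    then have IH: "\<rho> * \<gamma> ^ k * S k \<le> S (Suc k)" "(\<rho>/2) ^ Suc k * S 0 \<le> S (Suc k)"
      by auto
    have "0 < (\<rho>/2) ^ Suc k * S 0"
      using S0 \<rho> by simp
    then have pos: "0 < S (Suc k)"
      using IH(2) by linarith
    have "\<rho>/2 * S k \<le> \<rho> * \<gamma> ^ k * S k"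
      using \<gamma>_pow[of k] Suc.prems \<rho> S_nonneg[of k] by (intro mult_right_mono) auto
    then have "\<rho>/2 * S k \<le> S (Suc k)"
      using IH(1) by linarith
    then have "S k \<le> 2 / \<rho> * S (Suc k)"
      using \<rho> by (simp add: field_simps)
    moreover have "b k \<le> \<beta> * S (Suc k)"
    proof -
      have "b k \<le> \<beta> * ((\<rho>/2) ^ Suc k * S 0)"
        using b[of k] Suc.prems by (simp add: mult.assoc)
      also have "\<dots> \<le> \<beta> * S (Suc k)"
        using IH(2) coeffs(1) by (rule mult_left_mono)
      finally show ?thesis .
    qed
    ultimately have step: "\<rho> * \<gamma> ^ Suc k * S (Suc k) \<le> S (Suc (Suc k))"
      using growth_step[of "S k" "S (Suc k)" "S (Suc (Suc k))" "\<rho> * \<gamma> ^ k" \<kappa> \<delta> \<beta> "2 / \<rho>" "b k"]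
        rec[of k] Suc.prems IH(1) S_nonneg pos \<rho> \<kappa> coeffs \<open>0 \<le> \<gamma>\<close>
      by (simp add: \<gamma>_def numeral_2_eq_2 mult_ac)
    have "\<rho>/2 * S (Suc k) \<le> \<rho> * \<gamma> ^ Suc k * S (Suc k)"
      using \<gamma>_pow[of "Suc k"] Suc.prems \<rho> pos by (intro mult_right_mono) auto
    moreover have "(\<rho>/2) ^ Suc (Suc k) * S 0 \<le> \<rho>/2 * S (Suc k)"
      using mult_left_mono[OF IH(2), of "\<rho>/2"] \<rho> by (simp add: mult_ac)
    ultimately show ?case
      using step by linarith
  qed
  then show ?thesis
    by (cases H) auto
qed

lemma abs_weighted_sum_le:
  fixes w a b :: "'k \<Rightarrow> real"
  assumes "\<And>k. k \<in> K \<Longrightarrow> 0 \<le> w k" "sum w K = 1"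
    and "\<And>k. k \<in> K \<Longrightarrow> \<bar>a k\<bar> \<le> A" "\<And>k. k \<in> K \<Longrightarrow> \<bar>b k\<bar> \<le> B"
  shows "\<bar>\<Sum>k\<in>K. w k * a k * b k\<bar> \<le> A * B"
proof -
  have "\<bar>\<Sum>k\<in>K. w k * a k * b k\<bar> \<le> (\<Sum>k\<in>K. w k * (\<bar>a k\<bar> * \<bar>b k\<bar>))"
    using sum_abs[of "\<lambda>k. w k * a k * b k" K] assms(1) by (simp add: abs_mult mult.assoc)
  also have "\<dots> \<le> (\<Sum>k\<in>K. w k * (A * B))"
    using assms by (intro sum_mono mult_left_mono mult_mono) (auto intro: order_trans[OF abs_ge_zero])
  also have "\<dots> = A * B"
    using assms(2) by (simp add: sum_distrib_right[symmetric])
  finally show ?thesis .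
qed

lemma sum_split_first:
  fixes f :: "nat \<Rightarrow> real"
  assumes "1 \<le> T"
  shows "(\<Sum>t=1..T. f t) = f 1 + (\<Sum>t=1..T - 1. f (Suc t))"
proof -
  obtain T' where T: "T = Suc T'"
    using assms by (cases T) auto
  have "(\<Sum>t=1..T. f t) = f 1 + (\<Sum>t=Suc 1..Suc T'. f t)"
    unfolding T by (subst sum.atLeast_Suc_atMost) auto
  also have "(\<Sum>t=Suc 1..Suc T'. f t) = (\<Sum>t=1..T'. f (Suc t))"
    by (rule sum.shift_bounds_cl_Suc_ivl)
  finally show ?thesis
    using T by simp
qed

definition pair_weight :: "(nat \<Rightarrow> real) \<Rightarrow> nat \<times> nat \<Rightarrow> real" where
  "pair_weight p k = p (fst k) * p (snd k)"

definition pair_diff :: "(nat \<Rightarrow> real) \<Rightarrow> nat \<times> nat \<Rightarrow> real" where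
  "pair_diff v k = v (fst k) - v (snd k)"

lemma sum_pair_weight:
  assumes "(\<Sum>j<n. p j) = 1"
  shows "(\<Sum>k\<in>{..<n} \<times> {..<n}. pair_weight p k) = 1"
proof -
  have "(\<Sum>k\<in>{..<n} \<times> {..<n}. pair_weight p k) = (\<Sum>i<n. \<Sum>j<n. p i * p j)"
    by (simp add: pair_weight_def sum.cartesian_product case_prod_beta)
  also have "\<dots> = 1"
    using assms by (simp add: sum_product[symmetric])
  finally show ?thesis .
qed

lemma sum_pair_weight_pair_diff_eq_Var:
  assumes "(\<Sum>j<n. p j) = 1"
  shows "(\<Sum>k\<in>{..<n} \<times> {..<n}. pair_weight p k * (pair_diff v k)\<^sup>2) = 2 * Var_P n p v"
proof -
  define m where "m = (\<Sum>j<n. p j * v j)"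
  define s where "s = (\<Sum>j<n. p j * (v j)\<^sup>2)"
  have "(\<Sum>k\<in>{..<n} \<times> {..<n}. pair_weight p k * (pair_diff v k)\<^sup>2)
      = (\<Sum>i<n. \<Sum>j<n. (p i * (v i)\<^sup>2) * p j + p i * (p j * (v j)\<^sup>2) - 2 * (p i * v i) * (p j * v j))"
    unfolding pair_weight_def pair_diff_def
    by (simp add: sum.cartesian_product case_prod_beta power2_eq_square algebra_simps)
  also have "\<dots> = (\<Sum>i<n. (p i * (v i)\<^sup>2) * (\<Sum>j<n. p j) + p i * s - 2 * (p i * v i) * m)"
    unfolding s_def m_def by (simp add: sum.distrib sum_subtractf sum_distrib_left)
  also have "\<dots> = (\<Sum>i<n. p i * (v i)\<^sup>2) + (\<Sum>i<n. p i) * s - 2 * (\<Sum>i<n. p i * v i) * m"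
  proof -
    have "(\<Sum>i<n. p i * s) = (\<Sum>i<n. p i) * s"
      by (simp add: sum_distrib_right)
    moreover have "(\<Sum>i<n. 2 * (p i * v i) * m) = 2 * (\<Sum>i<n. p i * v i) * m"
      by (simp add: sum_distrib_left sum_distrib_right)
    ultimately show ?thesis
      using assms by (simp add: sum.distrib sum_subtractf)
  qed
  also have "\<dots> = 2 * s - 2 * m * m"
    using assms unfolding s_def m_def by simp
  also have "\<dots> = 2 * Var_P n p v"
  proof -
    have "Var_P n p v = (\<Sum>j<n. p j * (v j)\<^sup>2 - 2 * m * (p j * v j) + m * m * p j)"
      unfolding Var_P_def inner_n_def m_def[symmetric]
      by (intro sum.cong refl) (simp add: power2_eq_square algebra_simps)
    also have "\<dots> = s - m * m"
      using assms by (simp add: sum.distrib sum_subtractf sum_distrib_left[symmetric] s_def m_def)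
    finally show ?thesis by simp
  qed
  finally show ?thesis .
qed

lemma abs_pair_diff_le:
  assumes "k \<in> {..<n} \<times> {..<n}"
  shows "\<bar>pair_diff v k\<bar> \<le> 2 * sup_norm n v"
proof -
  have bound: "\<bar>v j\<bar> \<le> sup_norm n v" if "j < n" for j
    unfolding sup_norm_def by (rule Max_ge) (use that in auto)
  obtain i j where "k = (i, j)" "i < n" "j < n"
    using assms by auto
  moreover have "\<bar>v i - v j\<bar> \<le> \<bar>v i\<bar> + \<bar>v j\<bar>"
    by (rule abs_triangle_ineq4)
  ultimately show ?thesis
    using bound[of i] bound[of j] by (simp add: pair_diff_def)
qed

lemma fwd_diff_pair_diff_fdiff:
  "fwd_diff (\<lambda>t. pair_diff (fdiff h Z t)) = (\<lambda>t. pair_diff (fdiff (Suc h) Z t))"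
  by (simp add: fun_eq_iff fwd_diff_def pair_diff_def)

lemma consecutively_close_ratio_le:
  assumes "consecutively_close n T \<zeta> P" "1 \<le> t" "t < T" "j < n"
  shows "P (Suc t) j \<le> (1 + \<zeta>) * P t j" "P t j \<le> (1 + \<zeta>) * P (Suc t) j"
proof -
  have pos: "0 < P t j" "0 < P (Suc t) j"
    using assms unfolding consecutively_close_def full_support_def by auto
  have "P (Suc t) j / P t j \<le> Max ((\<lambda>j. P (Suc t) j / P t j) ` {..<n})"
    "P t j / P (Suc t) j \<le> Max ((\<lambda>j. P t j / P (Suc t) j) ` {..<n})"
    using assms(4) by (auto intro: Max_ge)
  moreover have "max (Max ((\<lambda>j. P t j / P (Suc t) j) ` {..<n}))
      (Max ((\<lambda>j. P (Suc t) j / P t j) ` {..<n})) \<le> 1 + \<zeta>"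
    using assms(1-3) unfolding consecutively_close_def by auto
  ultimately have "P (Suc t) j / P t j \<le> 1 + \<zeta>" "P t j / P (Suc t) j \<le> 1 + \<zeta>"
    by auto
  then show "P (Suc t) j \<le> (1 + \<zeta>) * P t j" "P t j \<le> (1 + \<zeta>) * P (Suc t) j"
    using pos by (auto simp: divide_le_eq)
qed

lemma Var_P_nonneg: "(\<And>j. j < n \<Longrightarrow> 0 \<le> p j) \<Longrightarrow> 0 \<le> Var_P n p v"
  unfolding Var_P_def by (intro sum_nonneg mult_nonneg_nonneg) auto

lemma Var_P_le_of_pair_weight_le:
  assumes "(\<Sum>j<n. p j) = 1" "(\<Sum>j<n. p' j) = 1"
    and "\<And>k. k \<in> {..<n} \<times> {..<n} \<Longrightarrow> pair_weight p' k \<le> c * pair_weight p k"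
  shows "Var_P n p' v \<le> c * Var_P n p v"
proof -
  have "2 * Var_P n p' v = (\<Sum>k\<in>{..<n} \<times> {..<n}. pair_weight p' k * (pair_diff v k)\<^sup>2)"
    using assms(2) by (simp add: sum_pair_weight_pair_diff_eq_Var)
  also have "\<dots> \<le> (\<Sum>k\<in>{..<n} \<times> {..<n}. c * (pair_weight p k * (pair_diff v k)\<^sup>2))"
    using assms(3) by (intro sum_mono) (auto simp: mult.assoc[symmetric] intro!: mult_right_mono)
  also have "\<dots> = 2 * (c * Var_P n p v)"
    using assms(1) by (simp add: sum_distrib_left[symmetric] sum_pair_weight_pair_diff_eq_Var)
  finally show ?thesis
    by simp
qed

locale close_distributions =
  fixes n T :: nat and \<zeta> :: real and P :: "nat \<Rightarrow> nat \<Rightarrow> real"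
  assumes close: "consecutively_close n T \<zeta> P" and zeta_nonneg: "0 \<le> \<zeta>"
begin

lemma P_nonneg: "1 \<le> t \<Longrightarrow> t \<le> T \<Longrightarrow> j < n \<Longrightarrow> 0 \<le> P t j"
  using close unfolding consecutively_close_def in_simplex_def by auto

lemma P_sum: "1 \<le> t \<Longrightarrow> t \<le> T \<Longrightarrow> (\<Sum>j<n. P t j) = 1"
  using close unfolding consecutively_close_def in_simplex_def by auto

sublocale drifting_weights "{..<n} \<times> {..<n}" T "(1 + \<zeta>)\<^sup>2" "\<lambda>t. pair_weight (P t)"
proof
  fix t k assume t: "1 \<le> t" "t < T" and k: "k \<in> {..<n} \<times> {..<n}"
  have le: "p' (fst k) * p' (snd k) \<le> (1 + \<zeta>)\<^sup>2 * (p (fst k) * p (snd k))"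
    if "\<And>j. j < n \<Longrightarrow> p' j \<le> (1 + \<zeta>) * p j" "\<And>j. j < n \<Longrightarrow> 0 \<le> p' j" for p p'
  proof -
    have "p' (fst k) * p' (snd k) \<le> ((1 + \<zeta>) * p (fst k)) * ((1 + \<zeta>) * p (snd k))"
      using that k order_trans[OF that(2) that(1)] by (intro mult_mono) auto
    then show ?thesis
      by (simp add: power2_eq_square mult_ac)
  qed
  show "pair_weight (P (Suc t)) k \<le> (1 + \<zeta>)\<^sup>2 * pair_weight (P t) k"
    using le[of "P (Suc t)" "P t"] consecutively_close_ratio_le(1)[OF close t] P_nonneg t
    by (simp add: pair_weight_def)
  show "pair_weight (P t) k \<le> (1 + \<zeta>)\<^sup>2 * pair_weight (P (Suc t)) k"
    using le[of "P t" "P (Suc t)"] consecutively_close_ratio_le(2)[OF close t] P_nonneg t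
    by (simp add: pair_weight_def)
qed (use zeta_nonneg P_nonneg in \<open>auto simp: pair_weight_def\<close>)

lemma energy_pair_diff_eq_Var:
  "N \<le> T \<Longrightarrow> energy N (\<lambda>t. pair_diff (v t)) = (\<Sum>t=1..N. 2 * Var_P n (P t) (v t))"
  unfolding energy_def by (intro sum.cong refl) (simp add: sum_pair_weight_pair_diff_eq_Var P_sum)

lemma Var_Suc_le: "1 \<le> t \<Longrightarrow> t < T \<Longrightarrow> Var_P n (P (Suc t)) v \<le> (1 + \<zeta>)\<^sup>2 * Var_P n (P t) v"
  by (rule Var_P_le_of_pair_weight_le) (auto simp: P_sum Suc_le)

lemma Var_le_Suc: "1 \<le> t \<Longrightarrow> t < T \<Longrightarrow> Var_P n (P t) v \<le> (1 + \<zeta>)\<^sup>2 * Var_P n (P (Suc t)) v"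
  by (rule Var_P_le_of_pair_weight_le) (auto simp: P_sum le_Suc)

lemma Var_le_half:
  assumes "1 \<le> t" "t \<le> T" and "\<And>j. j < n \<Longrightarrow> 0 \<le> v j \<and> v j \<le> 1"
  shows "Var_P n (P t) v \<le> 1/2"
proof -
  have "2 * Var_P n (P t) v = (\<Sum>k\<in>{..<n} \<times> {..<n}. pair_weight (P t) k * (pair_diff v k)\<^sup>2)"
    using assms by (simp add: sum_pair_weight_pair_diff_eq_Var P_sum)
  also have "\<dots> \<le> (\<Sum>k\<in>{..<n} \<times> {..<n}. pair_weight (P t) k)"
  proof (intro sum_mono mult_right_le_one_le)
    fix k assume "k \<in> {..<n} \<times> {..<n}"
    then have "\<bar>pair_diff v k\<bar> \<le> 1"
      using assms(3)[of "fst k"] assms(3)[of "snd k"] by (auto simp: pair_diff_def)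
    then show "(pair_diff v k)\<^sup>2 \<le> 1"
      by (simp add: abs_square_le_1)
    show "0 \<le> pair_weight (P t) k"
      using \<open>k \<in> _\<close> assms by (intro nonneg) auto
  qed simp
  also have "\<dots> = 1"
    using assms by (simp add: sum_pair_weight P_sum)
  finally show ?thesis
    by simp
qed

lemma energy_pair_diff_le:
  assumes "N \<le> T" and "\<And>t. 1 \<le> t \<Longrightarrow> t \<le> N \<Longrightarrow> sup_norm n (v t) \<le> B"
  shows "energy N (\<lambda>t. pair_diff (v t)) \<le> N * (2 * B)\<^sup>2"
proof -
  have "energy N (\<lambda>t. pair_diff (v t)) \<le> (\<Sum>t=1..N. \<Sum>k\<in>{..<n} \<times> {..<n}. pair_weight (P t) k * (2 * B)\<^sup>2)"
    unfolding energy_def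
  proof (intro sum_mono mult_left_mono)
    fix t k assume t: "t \<in> {1..N}" and k: "k \<in> {..<n} \<times> {..<n}"
    have "\<bar>pair_diff (v t) k\<bar> \<le> 2 * B"
      using abs_pair_diff_le[OF k, of "v t"] assms(2)[of t] t by simp
    then show "(pair_diff (v t) k)\<^sup>2 \<le> (2 * B)\<^sup>2"
      using power_mono[OF \<open>\<bar>pair_diff (v t) k\<bar> \<le> 2 * B\<close> abs_ge_zero, of 2] by simp
    show "0 \<le> pair_weight (P t) k"
      using t k assms(1) by (intro nonneg) auto
  qed
  also have "\<dots> = N * (2 * B)\<^sup>2"
    using assms(1) by (simp add: sum_distrib_right[symmetric] sum_pair_weight P_sum)
  finally show ?thesis .
qed

lemma abs_pair_boundary_le:
  assumes "1 \<le> t" "t \<le> T" "sup_norm n u \<le> A" "sup_norm n v \<le> B"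
  shows "\<bar>\<Sum>k\<in>{..<n} \<times> {..<n}. pair_weight (P t) k * pair_diff u k * pair_diff v k\<bar> \<le> 2 * A * (2 * B)"
proof (rule abs_weighted_sum_le)
  show "(\<Sum>k\<in>{..<n} \<times> {..<n}. pair_weight (P t) k) = 1"
    using assms by (simp add: sum_pair_weight P_sum)
  show "\<bar>pair_diff u k\<bar> \<le> 2 * A" if "k \<in> {..<n} \<times> {..<n}" for k
    using abs_pair_diff_le[OF that, of u] assms(3) by simp
  show "\<bar>pair_diff v k\<bar> \<le> 2 * B" if "k \<in> {..<n} \<times> {..<n}" for k
    using abs_pair_diff_le[OF that, of v] assms(4) by simp
qed (use assms in \<open>auto intro: nonneg\<close>)

lemma fdiff_energy_recursion:
  fixes Z :: "nat \<Rightarrow> nat \<Rightarrow> real" and B :: "nat \<Rightarrow> real"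
  defines "S \<equiv> \<lambda>h. energy (T - h) (\<lambda>t. pair_diff (fdiff h Z t))"
  assumes "m + 1 < T"
    and sup: "\<And>h t. h \<le> m + 1 \<Longrightarrow> 1 \<le> t \<Longrightarrow> t + h \<le> T \<Longrightarrow> sup_norm n (fdiff h Z t) \<le> B h"
  shows "S (m + 1) \<le> 8 * B (m + 1) * B m + sqrt ((1 + \<zeta>)\<^sup>2 * S m * S (m + 2))
    + ((1 + \<zeta>)\<^sup>2 - 1) * sqrt ((1 + \<zeta>)\<^sup>2 * S m * S (m + 1))"
proof -
  define N where "N = T - (m + 1)"
  define f where "f = (\<lambda>t. pair_diff (fdiff m Z t))"
  have N: "1 \<le> N" "N < T" "T - m = Suc N" "T - (m + 2) = N - 1"
    using assms(2) by (auto simp: N_def)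
  have f: "fwd_diff f = (\<lambda>t. pair_diff (fdiff (m + 1) Z t))"
    "fwd_diff (fwd_diff f) = (\<lambda>t. pair_diff (fdiff (m + 2) Z t))"
    by (simp_all only: f_def fwd_diff_pair_diff_fdiff Suc_eq_plus1 add.assoc one_add_one)
  have S: "S (m + 1) = energy N (fwd_diff f)" "S m = energy (Suc N) f"
    "S (m + 2) = energy (N - 1) (fwd_diff (fwd_diff f))"
    by (simp only: S_def N_def f(1)) (simp only: S_def N(3) f_def, simp only: S_def N(4) f(2))
  have "\<bar>\<Sum>k\<in>{..<n} \<times> {..<n}. pair_weight (P N) k * fwd_diff f N k * f (Suc N) k\<bar> \<le> 2 * B (m + 1) * (2 * B m)"
    unfolding f(1) unfolding f_def
    by (rule abs_pair_boundary_le; (rule sup)?) (use N in \<open>simp_all add: N_def\<close>)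
  moreover have "\<bar>\<Sum>k\<in>{..<n} \<times> {..<n}. pair_weight (P 1) k * fwd_diff f 1 k * f 1 k\<bar> \<le> 2 * B (m + 1) * (2 * B m)"
    unfolding f(1) unfolding f_def
    by (rule abs_pair_boundary_le; (rule sup)?) (use assms(2) in simp_all)
  ultimately show ?thesis
    unfolding S using energy_fwd_diff_recursion[OF N(1,2), of f] by linarith
qed

lemma sum_Var_increments_le:
  assumes "1 \<le> T" and Z: "\<And>t j. 1 \<le> t \<Longrightarrow> t \<le> T \<Longrightarrow> j < n \<Longrightarrow> 0 \<le> Z t j \<and> Z t j \<le> 1"
    and Z0: "\<And>j. j < n \<Longrightarrow> Z 0 j = 0"
  shows "(\<Sum>t=1..T. Var_P n (P t) (\<lambda>j. Z t j - Z (t - 1) j))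
    \<le> 1/2 + (1 + \<zeta>)\<^sup>2 / 2 * energy (T - 1) (\<lambda>t. pair_diff (fdiff 1 Z t))"
proof -
  have "Var_P n (P 1) (\<lambda>j. Z 1 j - Z 0 j) \<le> 1/2"
    using assms by (intro Var_le_half) auto
  moreover have "(\<Sum>t=1..T - 1. Var_P n (P (Suc t)) (\<lambda>j. Z (Suc t) j - Z t j))
      \<le> (\<Sum>t=1..T - 1. (1 + \<zeta>)\<^sup>2 * Var_P n (P t) (fdiff 1 Z t))"
    by (intro sum_mono) (auto intro: Var_Suc_le)
  moreover have "(\<Sum>t=1..T - 1. (1 + \<zeta>)\<^sup>2 * Var_P n (P t) (fdiff 1 Z t))
      = (1 + \<zeta>)\<^sup>2 / 2 * energy (T - 1) (\<lambda>t. pair_diff (fdiff 1 Z t))"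
    by (simp add: energy_pair_diff_eq_Var sum_distrib_left)
  ultimately show ?thesis
    using sum_split_first[OF assms(1), of "\<lambda>t. Var_P n (P t) (\<lambda>j. Z t j - Z (t - 1) j)"] by simp
qed

lemma sum_Var_lagged_ge:
  assumes "1 \<le> T" and Z: "\<And>j. j < n \<Longrightarrow> 0 \<le> Z T j \<and> Z T j \<le> 1"
  shows "energy T (\<lambda>t. pair_diff (Z t)) \<le> 2 * (1 + \<zeta>)\<^sup>2 * (\<Sum>t=1..T. Var_P n (P t) (Z (t - 1))) + 1"
proof -
  have "energy T (\<lambda>t. pair_diff (Z t)) = (\<Sum>t=1..T - 1. 2 * Var_P n (P t) (Z t)) + 2 * Var_P n (P T) (Z T)"
    using assms(1) by (cases T) (simp_all add: energy_pair_diff_eq_Var)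
  also have "\<dots> \<le> (\<Sum>t=1..T - 1. 2 * (1 + \<zeta>)\<^sup>2 * Var_P n (P (Suc t)) (Z t)) + 1"
    using Var_le_half[of T "Z T"] assms
    by (intro add_mono sum_mono) (auto simp: mult.assoc intro: Var_le_Suc)
  also have "\<dots> = 2 * (1 + \<zeta>)\<^sup>2 * (\<Sum>t=1..T - 1. Var_P n (P (Suc t)) (Z t)) + 1"
    by (simp add: sum_distrib_left)
  also have "\<dots> \<le> 2 * (1 + \<zeta>)\<^sup>2 * (\<Sum>t=1..T. Var_P n (P t) (Z (t - 1))) + 1"
    using sum_split_first[OF assms(1), of "\<lambda>t. Var_P n (P t) (Z (t - 1))"] assms
      Var_P_nonneg[of n "P 1" "Z 0"] P_nonneg[of 1]
    by (intro add_right_mono mult_left_mono) auto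
  finally show ?thesis .
qed

end

lemma ceiling_log2_bounds:
  assumes "4 \<le> T" "H = nat \<lceil>log 2 (real T)\<rceil>"
  shows "2 \<le> H" "H < T" "real T \<le> 2 ^ H"
proof -
  have "log 2 4 \<le> log 2 (real T)"
    using assms(1) by simp
  moreover have "log 2 (4::real) = 2"
    using log_powr_cancel[of 2 2] by (simp add: powr_numeral)
  ultimately have "(2::int) \<le> \<lceil>log 2 (real T)\<rceil>"
    by (simp add: le_ceiling_iff)
  then have H2: "2 \<le> H" and H: "real H = \<lceil>log 2 (real T)\<rceil>"
    using assms(2) by (simp_all add: le_nat_iff)
  then show "2 \<le> H"
    by simp
  have "log 2 (real T) \<le> real H"
    unfolding H by (rule le_of_int_ceiling)
  then have "2 powr log 2 (real T) \<le> 2 powr real H"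
    by simp
  then show "real T \<le> 2 ^ H"
    using assms(1) by (simp add: powr_realpow)
  have "real H - 1 < log 2 (real T)"
    unfolding H using ceiling_correct[of "log 2 (real T)"] by linarith
  then have "2 powr real (H - 1) < 2 powr log 2 (real T)"
    using H2 by (simp add: of_nat_diff)
  then have "2 ^ (H - 1) < real T"
    using assms(1) by (simp add: powr_realpow)
  moreover have "real H \<le> 2 ^ (H - 1)"
  proof -
    have "H \<le> 2 ^ (H - 1)"
      using less_exp[of "H - 1"] H2 by linarith
    then show ?thesis
      by (metis of_nat_le_iff of_nat_numeral of_nat_power)
  qed
  ultimately show "H < T"
    by simp
qed

lemma zeta_mul_H4_le:
  assumes "\<alpha> = 1 / (4 * real H)" "\<zeta> \<le> \<alpha> ^ 4 / 8256" "1 \<le> H"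
  shows "\<zeta> * real H ^ 4 \<le> 1 / 2113536"
proof -
  have "\<alpha> ^ 4 = 1 / (256 * real H ^ 4)"
    using assms(1) by (simp add: power_divide power_mult_distrib)
  then have "\<zeta> \<le> 1 / (2113536 * real H ^ 4)"
    using assms(2) by simp
  then show ?thesis
    using assms(3) by (simp add: field_simps)
qed

lemma zeta_le_third:
  assumes "1 \<le> H" "0 \<le> \<zeta>" "\<zeta> * real H ^ 4 \<le> 1 / 2113536"
  shows "\<zeta> \<le> 1/3"
proof -
  have "\<zeta> * 1 \<le> \<zeta> * real H ^ 4"
    using assms by (intro mult_left_mono) (auto simp: one_le_power)
  then show ?thesis
    using assms(3) by simp
qed

lemma kappa_bounds:
  fixes \<zeta> :: real
  assumes "0 \<le> \<zeta>" "\<zeta> \<le> 1/3"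
  shows "1 \<le> (1 + \<zeta>)\<^sup>2" "(1 + \<zeta>)\<^sup>2 \<le> 2" "(1 + \<zeta>)\<^sup>2 - 1 \<le> 3 * \<zeta>"
proof -
  have "\<zeta> * \<zeta> \<le> \<zeta> / 3"
    using assms mult_left_mono[OF assms(2) assms(1)] by simp
  then show "1 \<le> (1 + \<zeta>)\<^sup>2" "(1 + \<zeta>)\<^sup>2 \<le> 2" "(1 + \<zeta>)\<^sup>2 - 1 \<le> 3 * \<zeta>"
    using assms by (auto simp: power2_eq_square algebra_simps)
qed

lemma drift_penalty_le:
  assumes "1 \<le> H" "0 \<le> \<zeta>" "\<zeta> * real H ^ 4 \<le> 1 / 2113536"
  shows "((1 + \<zeta>)\<^sup>2 - 1)\<^sup>2 * ((1 + \<zeta>)\<^sup>2) ^ 3 * (4 * real H) \<le> (1 / (16 * real H))\<^sup>2"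
proof -
  have H: "1 \<le> real H"
    using assms(1) by simp
  have \<zeta>: "\<zeta> \<le> 1/3"
    using zeta_le_third[OF assms] .
  have "((1 + \<zeta>)\<^sup>2 - 1)\<^sup>2 * ((1 + \<zeta>)\<^sup>2) ^ 3 * (4 * real H) \<le> (3 * \<zeta>)\<^sup>2 * 2 ^ 3 * (4 * real H)"
    using kappa_bounds[OF assms(2) \<zeta>] H
    by (intro mult_right_mono mult_mono power_mono) auto
  also have "\<dots> = 288 * (\<zeta>\<^sup>2 * real H ^ 3) / real H ^ 2"
    using H by (simp add: power2_eq_square power3_eq_cube field_simps)
  also have "\<dots> \<le> 288 * (1 / 73728) / real H ^ 2"
  proof -
    have "\<zeta>\<^sup>2 * real H ^ 3 \<le> (\<zeta> * real H ^ 4)\<^sup>2"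
      using H by (simp add: power_mult_distrib power_mult[symmetric] mult_left_mono power_increasing)
    also have "\<dots> \<le> (1 / 2113536)\<^sup>2"
      using assms by (intro power_mono) auto
    finally show ?thesis
      by (intro divide_right_mono mult_left_mono) (auto simp: power2_eq_square)
  qed
  also have "\<dots> = (1 / (16 * real H))\<^sup>2"
    by (simp add: power2_eq_square)
  finally show ?thesis .
qed

lemma contraction_pow_ge_half:
  assumes "1 \<le> H" "0 \<le> \<zeta>" "\<zeta> * real H ^ 4 \<le> 1 / 2113536"
  shows "1/2 \<le> ((1 - 1 / (16 * real H) - 1 / (16 * real H))\<^sup>2 / (1 + \<zeta>)\<^sup>2) ^ H"
proof -
  define a where "a = 1 / (8 * real H)"
  define e where "e = a + \<zeta>"
  have H: "1 \<le> real H"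
    using assms(1) by simp
  have "real H * \<zeta> \<le> real H ^ 4 * \<zeta>"
    using H assms(2) by (intro mult_right_mono) (auto simp: power_increasing[of 1 4, simplified])
  then have "2 * real H * e \<le> 1/2"
    using assms(3) H by (simp add: e_def a_def algebra_simps)
  moreover have "0 \<le> a" "a \<le> 1/8"
    using H by (auto simp: a_def)
  ultimately have e: "2 * real H * e \<le> 1/2" "0 \<le> e" "e \<le> 1" "\<zeta> \<le> 1"
    using H assms(2) mult_right_mono[OF H, of e] by (auto simp: e_def)
  have "(1 - e)\<^sup>2 \<le> ((1 - a) * (1 - \<zeta>))\<^sup>2"
    using e \<open>0 \<le> a\<close> assms(2) by (intro power_mono) (auto simp: e_def algebra_simps)
  also have "\<dots> = (1 - a)\<^sup>2 * (1 - \<zeta>)\<^sup>2"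
    by (simp add: power_mult_distrib)
  also have "\<dots> \<le> (1 - a)\<^sup>2 * (1 / (1 + \<zeta>)\<^sup>2)"
  proof (rule mult_left_mono)
    have "(1 - \<zeta>)\<^sup>2 * (1 + \<zeta>)\<^sup>2 = (1 - \<zeta> * \<zeta>)\<^sup>2"
      by (simp add: power2_eq_square algebra_simps)
    also have "\<dots> \<le> 1"
      using e(4) assms(2) by (intro power_le_one) (auto simp: mult_le_one)
    finally show "(1 - \<zeta>)\<^sup>2 \<le> 1 / (1 + \<zeta>)\<^sup>2"
      using assms(2) by (simp add: le_divide_eq)
  qed simp
  finally have "(1 - e)\<^sup>2 \<le> (1 - 1 / (16 * real H) - 1 / (16 * real H))\<^sup>2 / (1 + \<zeta>)\<^sup>2"
    by (simp add: a_def)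
  moreover have "1/2 \<le> ((1 - e)\<^sup>2) ^ H"
  proof -
    have "1/2 \<le> 1 + real (2 * H) * (- e)"
      using e by simp
    also have "\<dots> \<le> (1 + (- e)) ^ (2 * H)"
      using e by (intro Bernoulli_inequality) auto
    finally show ?thesis
      by (simp add: power_mult)
  qed
  ultimately show ?thesis
    using power_mono[of "(1 - e)\<^sup>2" _ H] by (meson order_trans zero_le_power2)
qed

lemma boundary_term_le:
  assumes H: "1 \<le> H" and \<alpha>: "\<alpha> = 1 / (4 * real H)" and q: "q = sqrt (\<alpha> / 8)"
    and r: "\<alpha> / 4 \<le> r" and S0: "4096 * real H ^ 4 \<le> S0"
  shows "8 * (real H * q ^ (m + 1)) * (real H * q ^ m) \<le> 1 / (16 * real H) * r ^ (m + 1) * S0"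
proof -
  have H': "1 \<le> real H"
    using H by simp
  have S0_nonneg: "0 \<le> S0"
    using S0 zero_le_power[of "real H" 4] by linarith
  have q2: "q\<^sup>2 = \<alpha> / 8" and q: "0 \<le> q" "q \<le> 1" and \<alpha>_pos: "0 < \<alpha>"
    using H' by (simp_all add: q \<alpha> real_sqrt_le_1_iff)
  have "8 * (real H * q ^ (m + 1)) * (real H * q ^ m) = 8 * real H ^ 2 * q * (q\<^sup>2) ^ m"
    by (simp add: power2_eq_square power_mult_distrib mult_ac)
  also have "\<dots> \<le> 8 * real H ^ 2 * 1 * (\<alpha> / 4) ^ m"
    unfolding q2 using q \<alpha>_pos by (intro mult_mono power_mono) auto
  also have "\<dots> \<le> S0 / (256 * real H ^ 2) * (\<alpha> / 4) ^ m"
  proof (rule mult_right_mono)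
    have "8 * real H ^ 2 * (256 * real H ^ 2) = 2048 * real H ^ 4"
      by (simp add: power2_eq_square power4_eq_xxxx mult_ac)
    then have "8 * real H ^ 2 * (256 * real H ^ 2) \<le> S0"
      using S0 zero_le_power[of "real H" 4] by linarith
    then show "8 * real H ^ 2 * 1 \<le> S0 / (256 * real H ^ 2)"
      using H' by (simp add: le_divide_eq)
  qed (use \<alpha>_pos in simp)
  also have "\<dots> = 1 / (16 * real H) * (\<alpha> / 4) ^ (m + 1) * S0"
    by (simp add: \<alpha> power2_eq_square field_simps)
  also have "\<dots> \<le> 1 / (16 * real H) * r ^ (m + 1) * S0"
    using r \<alpha>_pos S0_nonneg H' by (intro mult_right_mono mult_left_mono power_mono) auto
  finally show ?thesis .
qed

lemma rate_half_ge:
  fixes \<alpha> \<zeta> :: real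
  assumes "0 \<le> \<zeta>" "\<zeta> \<le> 1/3" "0 \<le> \<alpha>"
  shows "\<alpha> / 4 \<le> 2 * \<alpha> / ((1 + \<zeta>)\<^sup>2)\<^sup>2 / 2"
proof -
  have "((1 + \<zeta>)\<^sup>2)\<^sup>2 \<le> 2\<^sup>2"
    using kappa_bounds[OF assms(1,2)] by (intro power_mono) auto
  then have "\<alpha> * ((1 + \<zeta>)\<^sup>2)\<^sup>2 \<le> \<alpha> * 4"
    using assms(3) by (intro mult_left_mono) auto
  then show ?thesis
    using kappa_bounds[OF assms(1,2)] by (simp add: field_simps)
qed

lemma top_energy_bound_le:
  assumes "real T \<le> 2 ^ H" "0 \<le> \<alpha>" "q = sqrt (\<alpha> / 8)"
  shows "real T * (2 * (real H * q ^ H))\<^sup>2 \<le> 4 * real H ^ 2 * (\<alpha> / 4) ^ H"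
proof -
  have "(q ^ H)\<^sup>2 = (q\<^sup>2) ^ H"
    by (simp only: power_mult[symmetric] mult.commute)
  also have "\<dots> = (1/2) ^ H * (\<alpha> / 4) ^ H"
    using assms(2,3) by (simp add: power_mult_distrib[symmetric])
  finally have "real T * (2 * (real H * q ^ H))\<^sup>2 = 4 * real H ^ 2 * (real T / 2 ^ H) * (\<alpha> / 4) ^ H"
    by (simp add: power_mult_distrib power_one_over)
  also have "\<dots> \<le> 4 * real H ^ 2 * 1 * (\<alpha> / 4) ^ H"
    using assms(1,2) by (intro mult_right_mono mult_left_mono) auto
  finally show ?thesis
    by simp
qed

lemma energy_sequence_growth:
  fixes S :: "nat \<Rightarrow> real" and H :: nat and \<alpha> q \<zeta> :: real
  defines "\<rho> \<equiv> 2 * \<alpha> / ((1 + \<zeta>)\<^sup>2)\<^sup>2"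
  assumes H: "1 \<le> H" and \<alpha>: "\<alpha> = 1 / (4 * real H)" and q: "q = sqrt (\<alpha> / 8)"
    and \<zeta>: "0 \<le> \<zeta>" "\<zeta> * real H ^ 4 \<le> 1 / 2113536"
    and S_nonneg: "\<And>h. 0 \<le> S h" and S0: "0 < S 0" "4096 * real H ^ 4 \<le> S 0"
    and base: "\<rho> * S 0 \<le> S 1"
    and rec: "\<And>m. m + 1 < H \<Longrightarrow> S (m + 1) \<le> 8 * (real H * q ^ (m + 1)) * (real H * q ^ m)
      + sqrt ((1 + \<zeta>)\<^sup>2 * S m * S (m + 2)) + ((1 + \<zeta>)\<^sup>2 - 1) * sqrt ((1 + \<zeta>)\<^sup>2 * S m * S (m + 1))"
  shows "(\<rho> / 2) ^ H * S 0 \<le> S H"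
proof -
  define \<kappa> where "\<kappa> = (1 + \<zeta>)\<^sup>2"
  define \<delta> where "\<delta> = 1 / (16 * real H)"
  have \<kappa>: "1 \<le> \<kappa>" "\<kappa> \<le> 2"
    using kappa_bounds[OF \<zeta>(1) zeta_le_third[OF H \<zeta>]] by (auto simp: \<kappa>_def)
  have \<alpha>_pos: "0 < \<alpha>"
    using H by (simp add: \<alpha>)
  have \<rho>: "0 < \<rho>" "\<alpha> / 4 \<le> \<rho> / 2"
    using \<alpha>_pos \<zeta>(1) rate_half_ge[OF \<zeta>(1) zeta_le_third[OF H \<zeta>]] by (simp_all add: \<rho>_def)
  show ?thesis
  proof (rule geometric_growth_chain[where \<kappa> = \<kappa> and \<beta> = \<delta> and \<delta> = \<delta>
        and b = "\<lambda>m. 8 * (real H * q ^ (m + 1)) * (real H * q ^ m)"])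
    have "(\<kappa> - 1)\<^sup>2 * \<kappa> * (2 / \<rho>) = ((1 + \<zeta>)\<^sup>2 - 1)\<^sup>2 * ((1 + \<zeta>)\<^sup>2) ^ 3 * (4 * real H)"
      using \<alpha>_pos \<kappa> by (simp add: \<rho>_def \<kappa>_def \<alpha> power2_eq_square power3_eq_cube field_simps)
    then show "(\<kappa> - 1)\<^sup>2 * \<kappa> * (2 / \<rho>) \<le> \<delta>\<^sup>2"
      using drift_penalty_le[OF H \<zeta>] by (simp add: \<delta>_def)
    show "1/2 \<le> ((1 - \<delta> - \<delta>)\<^sup>2 / \<kappa>) ^ H"
      using contraction_pow_ge_half[OF H \<zeta>] by (simp add: \<delta>_def \<kappa>_def)
    show "8 * (real H * q ^ (m + 1)) * (real H * q ^ m) \<le> \<delta> * (\<rho> / 2) ^ (m + 1) * S 0" for m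
      using boundary_term_le[OF H \<alpha> q \<rho>(2) S0(2)] by (simp add: \<delta>_def)
    show "\<delta> + \<delta> \<le> 1"
      using H by (simp add: \<delta>_def field_simps)
  qed (use S_nonneg S0 \<rho> \<kappa> base rec in \<open>auto simp: \<kappa>_def \<delta>_def\<close>)
qed

lemma energy_sequence_first_le:
  fixes S :: "nat \<Rightarrow> real" and H T :: nat and \<alpha> q \<zeta> :: real
  assumes H: "2 \<le> H" "real T \<le> 2 ^ H"
    and \<alpha>: "\<alpha> = 1 / (4 * real H)" and q: "q = sqrt (\<alpha> / 8)"
    and \<zeta>: "0 \<le> \<zeta>" "\<zeta> * real H ^ 4 \<le> 1 / 2113536"
    and S_nonneg: "\<And>h. 0 \<le> S h"
    and rec: "\<And>m. m + 1 < H \<Longrightarrow> S (m + 1) \<le> 8 * (real H * q ^ (m + 1)) * (real H * q ^ m)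
      + sqrt ((1 + \<zeta>)\<^sup>2 * S m * S (m + 2)) + ((1 + \<zeta>)\<^sup>2 - 1) * sqrt ((1 + \<zeta>)\<^sup>2 * S m * S (m + 1))"
    and top: "S H \<le> real T * (2 * (real H * q ^ H))\<^sup>2"
    and first: "S 1 \<le> 6 * S 0"
  shows "S 1 \<le> 2 * \<alpha> / ((1 + \<zeta>)\<^sup>2)\<^sup>2 * S 0 + 165120 * real H ^ 5"
proof (rule ccontr)
  define \<rho> where "\<rho> = 2 * \<alpha> / ((1 + \<zeta>)\<^sup>2)\<^sup>2"
  assume "\<not> ?thesis"
  then have base: "\<rho> * S 0 + 165120 * real H ^ 5 < S 1"
    by (simp add: \<rho>_def)
  have H1: "1 \<le> H" "1 \<le> real H"
    using H by auto
  have \<alpha>_pos: "0 < \<alpha>"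
    using H1 by (simp add: \<alpha>)
  have \<rho>: "\<alpha> / 4 \<le> \<rho> / 2"
    using rate_half_ge[OF \<zeta>(1) zeta_le_third[OF H1(1) \<zeta>]] \<alpha>_pos by (simp add: \<rho>_def)
  have H_pow: "0 \<le> real H ^ 2" "real H ^ 2 \<le> real H ^ 4" "real H ^ 4 \<le> real H ^ 5"
    using H1 by (auto intro: power_increasing)
  have S0: "27520 * real H ^ 5 < S 0"
    using base first \<rho> \<alpha>_pos S_nonneg[of 0] mult_nonneg_nonneg[of \<rho> "S 0"] by linarith
  then have growth_hyps: "0 < S 0" "4096 * real H ^ 4 \<le> S 0" "\<rho> * S 0 \<le> S 1"
    using base H_pow by linarith+
  have "(\<alpha> / 4) ^ H * S 0 \<le> (\<rho> / 2) ^ H * S 0"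
    using \<rho> \<alpha>_pos S_nonneg[of 0] by (intro mult_right_mono power_mono) auto
  also have "\<dots> \<le> S H"
    using energy_sequence_growth[OF H1(1) \<alpha> q \<zeta> S_nonneg growth_hyps(1,2)
        growth_hyps(3)[unfolded \<rho>_def] rec]
    by (simp add: \<rho>_def)
  also have "\<dots> \<le> (\<alpha> / 4) ^ H * (4 * real H ^ 2)"
    using top top_energy_bound_le[OF H(2) _ q] \<alpha>_pos by (simp add: mult_ac)
  finally have "S 0 \<le> 4 * real H ^ 2"
    using \<alpha>_pos by simp
  then show False
    using S0 H_pow by linarith
qed

lemma (in close_distributions) first_fdiff_energy_le:
  fixes Z :: "nat \<Rightarrow> nat \<Rightarrow> real"
  assumes H: "2 \<le> H" "H < T" "real T \<le> 2 ^ H" and \<alpha>: "\<alpha> = 1 / (4 * real H)"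
    and q: "q = sqrt (\<alpha> / 8)" and \<zeta>: "\<zeta> * real H ^ 4 \<le> 1 / 2113536"
    and diff_bound: "\<And>h t. h \<le> H \<Longrightarrow> 1 \<le> t \<Longrightarrow> t + h \<le> T \<Longrightarrow> sup_norm n (fdiff h Z t) \<le> real H * q ^ h"
  shows "energy (T - 1) (\<lambda>t. pair_diff (fdiff 1 Z t))
    \<le> 2 * \<alpha> / ((1 + \<zeta>)\<^sup>2)\<^sup>2 * energy T (\<lambda>t. pair_diff (Z t)) + 165120 * real H ^ 5"
proof -
  define S where "S h = energy (T - h) (\<lambda>t. pair_diff (fdiff h Z t))" for h
  have "S 1 \<le> 2 * \<alpha> / ((1 + \<zeta>)\<^sup>2)\<^sup>2 * S 0 + 165120 * real H ^ 5"
  proof (rule energy_sequence_first_le[OF H(1,3) \<alpha> q zeta_nonneg \<zeta>])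
    show "0 \<le> S h" for h
      by (simp add: S_def energy_nonneg)
    show "S (m + 1) \<le> 8 * (real H * q ^ (m + 1)) * (real H * q ^ m)
      + sqrt ((1 + \<zeta>)\<^sup>2 * S m * S (m + 2)) + ((1 + \<zeta>)\<^sup>2 - 1) * sqrt ((1 + \<zeta>)\<^sup>2 * S m * S (m + 1))"
      if "m + 1 < H" for m
      unfolding S_def by (rule fdiff_energy_recursion) (use that H diff_bound in auto)
    have "S H \<le> real (T - H) * (2 * (real H * q ^ H))\<^sup>2"
      unfolding S_def using diff_bound by (intro energy_pair_diff_le) auto
    also have "\<dots> \<le> real T * (2 * (real H * q ^ H))\<^sup>2"
      by (intro mult_right_mono) auto
    finally show "S H \<le> real T * (2 * (real H * q ^ H))\<^sup>2" .
    have "S 1 \<le> (2 * (1 + \<zeta>)\<^sup>2 + 2) * S 0"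
      using energy_fwd_diff_le[of "T - 1" "\<lambda>t. pair_diff (fdiff 0 Z t)", unfolded fwd_diff_pair_diff_fdiff] H
      by (simp add: S_def)
    also have "\<dots> \<le> 6 * S 0"
      using kappa_bounds[OF zeta_nonneg zeta_le_third[OF _ zeta_nonneg \<zeta>]] H
      by (intro mult_right_mono) (auto simp: S_def energy_nonneg)
    finally show "S 1 \<le> 6 * S 0" .
  qed
  then show ?thesis
    by (simp add: S_def)
qed

theorem lemmaC2:
  fixes n T H :: nat and \<alpha> \<alpha>0 \<zeta> :: real
    and Z P :: "nat \<Rightarrow> nat \<Rightarrow> real"
  assumes "n \<ge> 2" and "T \<ge> 4"
    and H_def: "H = nat \<lceil>log 2 (real T)\<rceil>"
    and alpha_def: "\<alpha> = 1 / (4 * real H)"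
    and alpha0_def: "\<alpha>0 = sqrt (\<alpha> / 8) / real H ^ 3"
    and Z_range: "\<forall>t. 1 \<le> t \<and> t \<le> T \<longrightarrow> (\<forall>j<n. 0 \<le> Z t j \<and> Z t j \<le> 1)"
    and Z0: "\<forall>j<n. Z 0 j = 0"
    and diff_bound: "\<forall>h t. h \<le> H \<and> 1 \<le> t \<and> t + h \<le> T \<longrightarrow>
          sup_norm n (fdiff h Z t) \<le> real H * (\<alpha>0 * real H ^ 3) ^ h"
    and close: "consecutively_close n T \<zeta> P"
    and zeta_lb: "1 / (2 * real T) \<le> \<zeta>" and zeta_ub: "\<zeta> \<le> \<alpha> ^ 4 / 8256"
  shows "(\<Sum>t=1..T. Var_P n (P t) (\<lambda>j. Z t j - Z (t - 1) j))
         \<le> 2 * \<alpha> * (\<Sum>t=1..T. Var_P n (P t) (Z (t - 1))) + 165120 * (1 + \<zeta>) * real H ^ 5 + 2"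
proof -
  have H: "2 \<le> H" "H < T" "real T \<le> 2 ^ H"
    using ceiling_log2_bounds[OF \<open>T \<ge> 4\<close> H_def] by auto
  have \<zeta>: "0 \<le> \<zeta>" "\<zeta> * real H ^ 4 \<le> 1 / 2113536"
    using zeta_mul_H4_le[OF alpha_def zeta_ub] H(1) order_trans[OF _ zeta_lb] by auto
  interpret close_distributions n T \<zeta> P
    using close \<zeta> by unfold_locales
  define \<kappa> where "\<kappa> = (1 + \<zeta>)\<^sup>2"
  define S0 S1 where "S0 = energy T (\<lambda>t. pair_diff (Z t))"
    and "S1 = energy (T - 1) (\<lambda>t. pair_diff (fdiff 1 Z t))"
  have \<kappa>: "1 \<le> \<kappa>" "\<kappa> \<le> 2" and \<alpha>: "0 < \<alpha>" "\<alpha> \<le> 1"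
    using kappa_bounds[OF \<zeta>(1) zeta_le_third[OF _ \<zeta>]] H(1) by (auto simp: \<kappa>_def alpha_def)
  have "S1 \<le> 2 * \<alpha> / \<kappa>\<^sup>2 * S0 + 165120 * real H ^ 5"
    unfolding S0_def S1_def \<kappa>_def
    by (rule first_fdiff_energy_le[OF H alpha_def _ \<zeta>(2)]) (use H diff_bound in \<open>auto simp: alpha0_def\<close>)
  then have "\<kappa> / 2 * S1 \<le> \<alpha> / \<kappa> * S0 + \<kappa> / 2 * (165120 * real H ^ 5)"
    using \<kappa> by (auto dest: mult_left_mono[of _ _ "\<kappa> / 2"] simp: field_simps power2_eq_square)
  also have "\<kappa> / 2 * (165120 * real H ^ 5) \<le> (1 + \<zeta>) * (165120 * real H ^ 5)"
    using \<kappa> \<zeta>(1) by (intro mult_right_mono) auto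
  finally have S1: "\<kappa> / 2 * S1 \<le> \<alpha> / \<kappa> * S0 + 165120 * (1 + \<zeta>) * real H ^ 5"
    by (simp only: mult_ac)
  have "S0 \<le> 2 * \<kappa> * (\<Sum>t=1..T. Var_P n (P t) (Z (t - 1))) + 1"
    using sum_Var_lagged_ge[of Z] Z_range \<open>T \<ge> 4\<close> by (simp add: S0_def \<kappa>_def)
  then have "\<alpha> / \<kappa> * S0 \<le> 2 * \<alpha> * (\<Sum>t=1..T. Var_P n (P t) (Z (t - 1))) + \<alpha> / \<kappa>"
    using \<alpha> \<kappa> by (auto dest: mult_left_mono[of _ _ "\<alpha> / \<kappa>"] simp: field_simps)
  moreover have "\<alpha> / \<kappa> \<le> 1"
    using \<alpha> \<kappa> by (simp add: divide_le_eq)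
  moreover have "(\<Sum>t=1..T. Var_P n (P t) (\<lambda>j. Z t j - Z (t - 1) j)) \<le> 1/2 + \<kappa> / 2 * S1"
    using sum_Var_increments_le[of Z] Z_range Z0 \<open>T \<ge> 4\<close> by (simp add: S1_def \<kappa>_def)
  ultimately show ?thesis
    using S1 by linarith
qed

end
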